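(* Let $0<M<\frac{1}{2(\ln 4-1)}$ and let $f=h+\overline{g}\in\mathcal{P}^{0}_{\mathcal{H}}(M)$ with $$f(z)=z+\sum_{n=2}^{\infty}a_nz^n+\overline{\sum_{n=2}^{\infty}b_nz^n},\qquad z\in\mathbb{D}.$$ Then $$|z|+|f(z)|+\sum_{n=2}^{\infty}(|a_n|+|b_n|)|z|^n\leq d\left(f(0),\partial f(\mathbb{D})\right)$$ for all $|z|=r\leq r_{M}$, where $r_{M}$ is the unique root in $(0,1)$ of the equation $$2r+4M\left(r+(1-r)\log(1-r)\right)-1-2M(1-2\log 2)=0.$$ The radius $r_M$ is the best possible.
   Context: $\mathbb{D}=\{z\in\mathbb{C}:|z|<1\}$. $\mathcal{H}_0$ denotes the class of complex-valued harmonic mappings $f=h+\overline{g}$ on $\mathbb{D}$, with $h,g$ analytic in $\mathbb{D}$, normalized by $h(0)=0$, $h'(0)=1$, $g(0)=0$, $g'(0)=0$. For $M>0$, $$\mathcal{P}^{0}_{\mathcal{H}}(M)=\{f=h+\overline{g}\in\mathcal{H}_0:\ \operatorname{Re}(zh''(z))>-M+|zg''(z)|\ \text{for all } z\in\mathbb{D}\}.$$ $d(f(0),\partial f(\mathbb{D}))$ denotes the Euclidean distance from $f(0)$ to the boundary of $f(\mathbb{D})$, i.e. $\liminf_{|z|\to 1}|f(z)-f(0)|$. "Best possible" means the radius cannot be replaced by any larger number (the extremal function being $f_M(z)=z+2M\sum_{n\ge2}\frac{z^n}{n(n-1)}$). *)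

theory Defs
  imports "HOL-Complex_Analysis.Complex_Analysis"
begin

definition PH0 :: "real \<Rightarrow> (complex \<Rightarrow> complex) \<Rightarrow> (complex \<Rightarrow> complex) \<Rightarrow> bool" where
  "PH0 M h g \<longleftrightarrow>
     h holomorphic_on ball 0 1 \<and> g holomorphic_on ball 0 1 \<and>
     h 0 = 0 \<and> deriv h 0 = 1 \<and> g 0 = 0 \<and> deriv g 0 = 0 \<and>
     (\<forall>z\<in>ball 0 1. Re (z * (deriv ^^ 2) h z) > - M + cmod (z * (deriv ^^ 2) g z))"

definition harm :: "(complex \<Rightarrow> complex) \<Rightarrow> (complex \<Rightarrow> complex) \<Rightarrow> complex \<Rightarrow> complex" where
  "harm h g z = h z + cnj (g z)"

definition tcoeff :: "(complex \<Rightarrow> complex) \<Rightarrow> nat \<Rightarrow> complex" where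
  "tcoeff h n = (deriv ^^ n) h 0 / of_nat (fact n)"

text \<open>d(f(0), boundary f(D)) = liminf_{|z| \<rightarrow> 1^-} |f z - f 0|.\<close>
definition bdist :: "(complex \<Rightarrow> complex) \<Rightarrow> ereal" where
  "bdist f = Liminf (filtercomap norm (at_left (1::real))) (\<lambda>z. ereal (cmod (f z - f 0)))"

definition bohr_lhs :: "(complex \<Rightarrow> complex) \<Rightarrow> (complex \<Rightarrow> complex) \<Rightarrow> complex \<Rightarrow> real" where
  "bohr_lhs h g z = cmod z + cmod (harm h g z)
     + (\<Sum>n. (cmod (tcoeff h (n+2)) + cmod (tcoeff g (n+2))) * cmod z ^ (n+2))"

definition rM_eq :: "real \<Rightarrow> real \<Rightarrow> real" where
  "rM_eq M r = 2*r + 4*M*(r + (1-r) * ln (1-r)) - 1 - 2*M*(1 - 2 * ln 2)"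

definition rM :: "real \<Rightarrow> real" where
  "rM M = (THE r. 0 < r \<and> r < 1 \<and> rM_eq M r = 0)"

definition fM_h :: "real \<Rightarrow> complex \<Rightarrow> complex" where
  "fM_h M z = z + 2 * of_real M * (\<Sum>n. z ^ (n+2) / of_nat ((n+2) * (n+1)))"

end

theory Submission
  imports Defs
begin

text \<open>
  For every unimodular \<epsilon> the analytic function F = h + \<epsilon> g satisfies Re (z F''(z)) > -M, so
  q(z) = z F''(z) maps the disc into the half-plane Re > -M with q(0) = 0. Schwarz's lemma for
  the Cayley transform of q gives Re q(z) >= -2M|z|/(1+|z|); integrating twice along radii
  yields |f(z)| >= |z| - 2M((1+|z|) ln(1+|z|) - |z|), hence d(f(0), boundary f(D)) >= 1 - 2M(2 ln 2 - 1).
  Caratheodory's coefficient bound for q gives |a_n| + |b_n| <= 2M/(n(n-1)), so the Bohr sum is at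
  most 2r + 4M(r + (1-r) ln(1-r)), and the two bounds meet exactly at r = r_M. The extremal
  function f_M attains the coefficient bounds and, on the negative radius, the growth bound,
  which shows that r_M cannot be enlarged.
\<close>

section \<open>Power series\<close>

lemma sums_power_div_consecutive:
  fixes w :: complex
  assumes "norm w < 1"
  shows "(\<lambda>n. w ^ (n+2) / of_nat ((n+2) * (n+1))) sums (w + (1-w) * ln (1-w))"
proof -
  have "norm (-w) < 1" using assms by simp
  from Ln_series'[OF this] have "(\<lambda>n. - (w^n) / of_nat n) sums ln (1 - w)"
    by simp
  then have log: "(\<lambda>n. - (w ^ Suc n) / of_nat (Suc n)) sums ln (1 - w)"
    by (subst sums_Suc_iff) simp
  have "(\<lambda>n. - (w ^ Suc (Suc n)) / of_nat (Suc (Suc n))) sums (ln (1 - w) + w)"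
    using log by (subst sums_Suc_iff) simp
  then have log2: "(\<lambda>n. - (w ^ (n+2)) / of_nat (n+2)) sums (ln (1 - w) + w)"
    by (simp add: numeral_2_eq_2)
  have "(\<lambda>n. w ^ (n+2) / of_nat (n+1) + - (w ^ (n+2)) / of_nat (n+2)) sums (-w * ln (1-w) + (ln (1-w) + w))"
    using sums_add[OF sums_mult[OF log, of "-w"] log2] by (simp add: power_Suc mult_ac)
  moreover have "w ^ (n+2) / of_nat (n+1) + - (w ^ (n+2)) / of_nat (n+2) = w ^ (n+2) / of_nat ((n+2) * (n+1))" for n
  proof -
    have "(of_nat (n+1) :: complex) \<noteq> 0" "(of_nat (n+2) :: complex) \<noteq> 0"
      by (simp_all del: of_nat_Suc add: of_nat_eq_0_iff)
    then show ?thesis by (simp add: field_simps)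
  qed
  ultimately show ?thesis by (simp add: algebra_simps)
qed

lemma Ln_one_minus_of_real:
  fixes x :: real
  assumes "\<bar>x\<bar> < 1"
  shows "ln (1 - complex_of_real x) = complex_of_real (ln (1 - x))"
  using assms by (metis Ln_of_real diff_gt_0_iff_gt abs_less_iff of_real_1 of_real_diff)

lemma sums_power_div_consecutive_real:
  fixes x :: real
  assumes "\<bar>x\<bar> < 1"
  shows "(\<lambda>n. x ^ (n+2) / of_nat ((n+2) * (n+1))) sums (x + (1-x) * ln (1-x))"
proof -
  from sums_power_div_consecutive[of "complex_of_real x"] Ln_one_minus_of_real[OF assms] assms
  have "(\<lambda>n. complex_of_real (x ^ (n+2) / of_nat ((n+2) * (n+1)))) sums complex_of_real (x + (1-x) * ln (1-x))"
    by simp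
  then show ?thesis by (simp only: sums_of_real_iff)
qed

lemma sums_tcoeff_from_two:
  assumes "f holomorphic_on ball 0 1" "norm z < 1"
  shows "(\<lambda>n. tcoeff f (n+2) * z ^ (n+2)) sums (f z - f 0 - deriv f 0 * z)"
proof -
  have "(\<lambda>n. tcoeff f n * z ^ n) sums f z"
    using holomorphic_power_series[OF assms(1), of z] assms(2) by (simp add: tcoeff_def)
  then have "(\<lambda>n. tcoeff f (Suc n) * z ^ Suc n) sums (f z - tcoeff f 0 * z ^ 0)"
    by (subst sums_Suc_iff) simp
  then have "(\<lambda>n. tcoeff f (Suc (Suc n)) * z ^ Suc (Suc n))
      sums (f z - tcoeff f 0 * z ^ 0 - tcoeff f (Suc 0) * z ^ Suc 0)"
    by (subst sums_Suc_iff[where f = "\<lambda>n. tcoeff f (Suc n) * z ^ Suc n"]) simp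
  then show ?thesis by (simp add: tcoeff_def numeral_2_eq_2)
qed

section \<open>Holomorphic functions with real part bounded below\<close>

lemma Re_div_one_minus_ge:
  fixes u :: complex
  assumes "norm u < 1"
  shows "Re (u / (1 - u)) \<ge> - norm u / (1 + norm u)"
proof -
  define a where "a = Re u"
  define b where "b = Im u"
  define s where "s = norm u"
  have s2: "s^2 = a^2 + b^2" and "-s \<le> a" "a < 1" "0 \<le> s" "s < 1"
    using abs_Re_le_cmod[of u] assms by (auto simp: a_def b_def s_def cmod_power2)
  have D: "(1-a)^2 + b^2 > 0" using \<open>a < 1\<close> by (simp add: add_pos_nonneg)
  have "(a*(1-a) - b^2) * (1+s) + s*((1-a)^2 + b^2) = (1-s)*(a+s)"
    using s2 by (simp add: algebra_simps power2_eq_square)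
  moreover have "(1-s)*(a+s) \<ge> 0" using \<open>-s \<le> a\<close> \<open>s < 1\<close> by simp
  ultimately have "(a*(1-a) - b^2) * (1+s) \<ge> - s*((1-a)^2 + b^2)" by linarith
  then have "(a*(1-a) - b^2) / ((1-a)^2 + b^2) \<ge> - s/(1+s)"
    using D \<open>0 \<le> s\<close> by (simp add: field_simps)
  moreover have "Re (u / (1 - u)) = (a*(1-a) - b^2) / ((1-a)^2 + b^2)"
    by (simp add: Re_divide a_def b_def power2_eq_square)
  ultimately show ?thesis by (simp only: s_def)
qed

lemma Schwarz_Re_lower_bound:
  fixes q :: "complex \<Rightarrow> complex"
  assumes hol: "q holomorphic_on ball 0 1" and "q 0 = 0"
    and re: "\<And>z. z \<in> ball 0 1 \<Longrightarrow> Re (q z) > -M" and w: "norm w < 1"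
  shows "Re (q w) \<ge> -2*M * norm w / (1 + norm w)"
proof -
  have "M > 0" using re[of 0] \<open>q 0 = 0\<close> by simp
  have nz: "q z + 2*M \<noteq> 0" if "z \<in> ball 0 1" for z
  proof -
    have "Re (q z + 2*M) > 0" using re[OF that] \<open>M > 0\<close> by simp
    then show ?thesis by (metis order_less_irrefl zero_complex.sel(1))
  qed
  \<comment> \<open>the Cayley transform maps the half-plane Re > -M onto the disc\<close>
  define \<phi> where "\<phi> z = q z / (q z + 2*M)" for z
  have "\<phi> holomorphic_on ball 0 1"
    unfolding \<phi>_def using hol nz by (intro holomorphic_intros) auto
  moreover have "\<phi> 0 = 0" by (simp add: \<phi>_def \<open>q 0 = 0\<close>)
  moreover have lt1: "norm (\<phi> z) < 1" if "norm z < 1" for z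
  proof -
    have z: "z \<in> ball 0 1" using that by simp
    have "(norm (q z + 2*M))^2 - (norm (q z))^2 = 4*M*(Re (q z) + M)"
      by (simp only: cmod_power2) (simp add: power2_eq_square algebra_simps)
    moreover have "4*M*(Re (q z) + M) > 0" using re[OF z] \<open>M > 0\<close> by simp
    ultimately have "(norm (q z))^2 < (norm (q z + 2*M))^2" by linarith
    then have "norm (q z) < norm (q z + 2*M)" by (simp add: power_less_imp_less_base)
    then show ?thesis unfolding \<phi>_def using nz[OF z] by (simp add: norm_divide divide_less_eq)
  qed
  ultimately have "norm (\<phi> w) \<le> norm w"
    using Schwarz_Lemma(1)[of \<phi> w] w by simp
  then have "norm (\<phi> w) / (1 + norm (\<phi> w)) \<le> norm w / (1 + norm w)"
    by (simp add: divide_simps add_pos_nonneg algebra_simps)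
  moreover have "q w = (2*M) *\<^sub>R (\<phi> w / (1 - \<phi> w))"
  proof -
    have "\<phi> w \<noteq> 1" using lt1[OF w] by auto
    moreover have "\<phi> w * (q w + 2*M) = q w" unfolding \<phi>_def using nz w by simp
    ultimately show ?thesis by (simp add: scaleR_conv_of_real field_simps)
  qed
  then have "Re (q w) \<ge> 2*M * - (norm (\<phi> w) / (1 + norm (\<phi> w)))"
    using mult_left_mono[OF Re_div_one_minus_ge[OF lt1[OF w]], of "2*M"] \<open>M > 0\<close> by simp
  ultimately show ?thesis
    using mult_left_mono[of "norm (\<phi> w) / (1 + norm (\<phi> w))" "norm w / (1 + norm w)" "2*M"] \<open>M > 0\<close>
    by simp
qed

lemma has_integral_Taylor_coeff_circle:
  fixes f :: "complex \<Rightarrow> complex"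
  assumes "f holomorphic_on ball 0 R" "0 < r" "r < R"
  shows "((\<lambda>t. f (of_real r * cis (2*pi*t)) / cis (2*pi*t) ^ k)
           has_integral (deriv ^^ k) f 0 / fact k * of_real r ^ k) {0..1}"
proof -
  have "cball 0 r \<subseteq> ball (0::complex) R" using assms by auto
  then have "continuous_on (cball 0 r) f" "f holomorphic_on ball 0 r"
    using assms(1) ball_subset_cball
    by (blast intro: holomorphic_on_imp_continuous_on holomorphic_on_subset)+
  from Cauchy_has_contour_integral_higher_derivative_circlepath[OF this, of 0 k] assms(2)
  have "((\<lambda>u. f u / (u - 0) ^ Suc k) has_contour_integral (2*pi*\<i> / fact k * (deriv ^^ k) f 0))
          (circlepath 0 r)"
    by simp
  moreover have "circlepath 0 r t = of_real r * cis (2*pi*t)" for t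
    by (simp add: circlepath_def part_circlepath_def linepath_def cis_conv_exp mult_ac)
  moreover have "vector_derivative (circlepath 0 r) (at t) = 2*pi*\<i> * of_real r * cis (2*pi*t)" for t
    by (simp add: vector_derivative_circlepath cis_conv_exp mult_ac)
  ultimately have "((\<lambda>t. f (of_real r * cis (2*pi*t)) / (of_real r * cis (2*pi*t) - 0) ^ Suc k
           * (2*pi*\<i> * of_real r * cis (2*pi*t)))
         has_integral (2*pi*\<i> / fact k * (deriv ^^ k) f 0)) {0..1}"
    unfolding has_contour_integral by simp
  moreover have "f (of_real r * cis (2*pi*t)) / (of_real r * cis (2*pi*t)) ^ Suc k
           * (2*pi*\<i> * of_real r * cis (2*pi*t))
      = (2*pi*\<i> / of_real r ^ k) * (f (of_real r * cis (2*pi*t)) / cis (2*pi*t) ^ k)" for t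
    using assms(2) by (simp add: field_simps power_mult_distrib)
  ultimately have "((\<lambda>t. (2*pi*\<i> / of_real r ^ k) * (f (of_real r * cis (2*pi*t)) / cis (2*pi*t) ^ k))
         has_integral (2*pi*\<i> / of_real r ^ k) * ((deriv ^^ k) f 0 / fact k * of_real r ^ k)) {0..1}"
    using assms(2) by (simp add: field_simps)
  then show ?thesis
    using assms(2) by (subst (asm) has_integral_mult_right_iff) auto
qed

lemma has_integral_circle_mult_cis_power:
  fixes q :: "complex \<Rightarrow> complex"
  assumes "q holomorphic_on ball 0 1" "q 0 = 0" "0 < r" "r < 1"
  shows "((\<lambda>t. q (of_real r * cis (2*pi*t)) * cis (2*pi*t) ^ k) has_integral 0) {0..1}"
proof -
  have "(of_real r :: complex) ^ k \<noteq> 0" using assms(3) by simp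
  moreover have "((\<lambda>t. of_real r ^ k * (q (of_real r * cis (2*pi*t)) * cis (2*pi*t) ^ k)) has_integral 0) {0..1}"
    using has_integral_Taylor_coeff_circle[of "\<lambda>u. q u * u ^ k" 1 r 0] assms
    by (simp add: holomorphic_intros power_mult_distrib mult_ac)
  ultimately show ?thesis by (subst (asm) has_integral_mult_right_iff) auto
qed

lemma has_integral_mult_le_of_zero_means:
  fixes a b :: "real \<Rightarrow> real"
  assumes "((\<lambda>t. a t * b t) has_integral A) {0..1}" "(a has_integral 0) {0..1}" "(b has_integral 0) {0..1}"
    and "\<And>t. a t \<ge> -M" "\<And>t. b t \<le> 1"
  shows "A \<le> M"
proof -
  have "((\<lambda>t. a t * b t + M * b t) has_integral A + M * 0) {0..1}"
    by (intro has_integral_add has_integral_mult_right assms(1,3))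
  then have lhs: "((\<lambda>t. (a t + M) * b t) has_integral A) {0..1}"
    by (simp add: distrib_right)
  have "((\<lambda>t. a t + M) has_integral 0 + M) {0..1}"
    using has_integral_add[OF assms(2) has_integral_const_real[of M 0 1]] by simp
  then have rhs: "((\<lambda>t. a t + M) has_integral M) {0..1}" by simp
  have "(a t + M) * b t \<le> a t + M" for t
    using mult_left_le[OF assms(5), of "a t + M"] assms(4)[of t] by simp
  then show ?thesis using has_integral_le[OF lhs rhs] by simp
qed

lemma cnj_sgn_mult_self: "cnj (sgn c) * c = complex_of_real (cmod c)"
proof (cases "c = 0")
  case False
  have "cnj (sgn c) * c = (c * cnj c) / of_real (cmod c)"
    by (simp add: sgn_div_norm scaleR_conv_of_real divide_inverse mult_ac)
  also have "c * cnj c = of_real (cmod c) * of_real (cmod c)"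
    by (simp add: complex_norm_square[symmetric] power2_eq_square)
  finally show ?thesis using False by simp
qed simp

lemma Caratheodory_coeff_bound_circle:
  fixes q :: "complex \<Rightarrow> complex"
  assumes hol: "q holomorphic_on ball 0 1" and "q 0 = 0"
    and re: "\<And>z. z \<in> ball 0 1 \<Longrightarrow> Re (q z) > -M" and "k \<ge> 1" and r: "0 < r" "r < 1"
  shows "norm ((deriv ^^ k) q 0 / fact k) * r ^ k \<le> 2*M"
proof -
  define c where "c = (deriv ^^ k) q 0 / fact k"
  define E where "E t = cis (2*pi*t)" for t
  define \<gamma> where "\<gamma> t = of_real r * E t" for t
  have coeff: "((\<lambda>t. q (\<gamma> t) / E t ^ k) has_integral c * of_real r ^ k) {0..1}"
    using has_integral_Taylor_coeff_circle[OF hol r, of k] by (simp add: c_def \<gamma>_def E_def)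
  have conj_coeff: "((\<lambda>t. q (\<gamma> t) * E t ^ k) has_integral 0) {0..1}"
    using has_integral_circle_mult_cis_power[OF hol \<open>q 0 = 0\<close> r] by (simp add: \<gamma>_def E_def)
  have mean: "((\<lambda>t. q (\<gamma> t)) has_integral 0) {0..1}"
    using has_integral_circle_mult_cis_power[OF hol \<open>q 0 = 0\<close> r, of 0] by (simp add: \<gamma>_def E_def)
  have mean_E: "((\<lambda>t. 1 / E t ^ k) has_integral 0) {0..1}"
    using has_integral_Taylor_coeff_circle[of "\<lambda>_. 1" 1 r k] r \<open>k \<ge> 1\<close> by (simp add: E_def)
  \<comment> \<open>a weight bounded by 1 that rotates the k-th Fourier coefficient of q onto norm c\<close>
  define w where "w t = cnj (sgn c) / E t ^ k" for t
  have "norm (w t) \<le> 1" for t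
    by (simp add: w_def E_def norm_divide norm_power norm_sgn)
  then have "Re (w t) \<le> 1" for t by (meson complex_Re_le_cmod order_trans)
  have "((\<lambda>t. q (\<gamma> t) * (w t + cnj (w t))) has_integral of_real (norm c * r ^ k)) {0..1}"
  proof -
    have "cnj (w t) = sgn c * E t ^ k" for t
      by (simp add: w_def E_def cis_cnj divide_inverse power_inverse[symmetric])
    then have integrand: "(\<lambda>t. q (\<gamma> t) / E t ^ k * cnj (sgn c) + q (\<gamma> t) * E t ^ k * sgn c)
        = (\<lambda>t. q (\<gamma> t) * (w t + cnj (w t)))"
      by (simp add: w_def algebra_simps)
    have integral: "c * of_real r ^ k * cnj (sgn c) + 0 * sgn c = of_real (norm c * r ^ k)"
      using cnj_sgn_mult_self[of c] by (simp add: mult_ac)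
    show ?thesis
      using has_integral_add[OF has_integral_mult_left[OF coeff, of "cnj (sgn c)"]
          has_integral_mult_left[OF conj_coeff, of "sgn c"]]
      unfolding integrand integral .
  qed
  from has_integral_Re[OF this]
  have "((\<lambda>t. 2 * Re (q (\<gamma> t)) * Re (w t)) has_integral norm c * r ^ k) {0..1}"
    by (simp add: mult_ac)
  moreover have "((\<lambda>t. 2 * Re (q (\<gamma> t))) has_integral 0) {0..1}"
    using has_integral_mult_left[OF has_integral_Re[OF mean], of 2] by (simp add: mult.commute)
  moreover have "((\<lambda>t. Re (w t)) has_integral 0) {0..1}"
    using has_integral_Re[OF has_integral_mult_left[OF mean_E, of "cnj (sgn c)"]] by (simp add: w_def)
  moreover have "2 * Re (q (\<gamma> t)) \<ge> - (2*M)" for t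
    using re[of "\<gamma> t"] r by (simp add: \<gamma>_def E_def norm_mult)
  ultimately have "norm c * r ^ k \<le> 2*M"
    by (rule has_integral_mult_le_of_zero_means) fact
  then show ?thesis by (simp add: c_def)
qed

lemma Caratheodory_coeff_bound:
  fixes q :: "complex \<Rightarrow> complex"
  assumes "q holomorphic_on ball 0 1" and "q 0 = 0"
    and "\<And>z. z \<in> ball 0 1 \<Longrightarrow> Re (q z) > -M" and "k \<ge> 1"
  shows "norm ((deriv ^^ k) q 0 / fact k) \<le> 2*M"
proof (rule field_le_mult_one_interval)
  fix x :: real
  assume "0 < x" "x < 1"
  with \<open>k \<ge> 1\<close> have "0 < root k x" "root k x < 1" "root k x ^ k = x" by auto
  with Caratheodory_coeff_bound_circle[OF assms] show "x * norm ((deriv ^^ k) q 0 / fact k) \<le> 2*M"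
    by (metis mult.commute)
qed

section \<open>The analytic class P0(M)\<close>

definition P0 :: "real \<Rightarrow> (complex \<Rightarrow> complex) \<Rightarrow> bool" where
  "P0 M F \<longleftrightarrow> F holomorphic_on ball 0 1 \<and> F 0 = 0 \<and> deriv F 0 = 1 \<and>
     (\<forall>z\<in>ball 0 1. Re (z * (deriv ^^ 2) F z) > -M)"

definition growth_minorant :: "real \<Rightarrow> real \<Rightarrow> real" where
  "growth_minorant M r = r + 2*M*(r - (1 + r) * ln (1 + r))"

lemma has_real_derivative_growth_minorant:
  assumes "s > -1"
  shows "(growth_minorant M has_real_derivative 1 - 2*M * ln (1 + s)) (at s)"
proof -
  have "1 + s \<noteq> 0" using assms by simp
  then show ?thesis
    unfolding growth_minorant_def[abs_def] using assms by (auto intro!: derivative_eq_intros)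
qed

lemma of_real_mult_in_ball:
  fixes w :: complex
  assumes "norm w < 1" "t \<in> {0..1}"
  shows "of_real t * w \<in> ball 0 1"
proof -
  have "norm (of_real t * w) \<le> norm w"
    using assms(2) by (auto simp: norm_mult intro: mult_left_le_one_le)
  then show ?thesis using assms(1) by simp
qed

lemma has_vector_derivative_along_ray:
  fixes F :: "complex \<Rightarrow> complex"
  assumes "F holomorphic_on S" "open S" "of_real t * w \<in> S"
  shows "((\<lambda>t. F (of_real t * w)) has_vector_derivative w * deriv F (of_real t * w)) (at t)"
proof -
  have "((\<lambda>t. of_real t * w) has_vector_derivative w) (at t)"
    by (auto intro!: derivative_eq_intros)
  from field_vector_diff_chain_at[OF this holomorphic_derivI[OF assms]]
  show ?thesis by (simp add: o_def)
qed

lemma P0_Re_deriv_ge: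
  assumes "P0 M F" and w: "norm w < 1"
  shows "Re (deriv F w) \<ge> 1 - 2*M * ln (1 + norm w)"
proof -
  have holF: "F holomorphic_on ball 0 1" and "deriv F 0 = 1"
    and re: "\<And>z. z \<in> ball 0 1 \<Longrightarrow> Re (z * (deriv ^^ 2) F z) > -M"
    using assms(1) by (auto simp: P0_def)
  have hol': "deriv F holomorphic_on ball 0 1" by (rule holomorphic_deriv[OF holF open_ball])
  have hq: "(\<lambda>z. z * (deriv ^^ 2) F z) holomorphic_on ball 0 1"
    by (intro holomorphic_intros holomorphic_higher_deriv[OF holF]) auto
  define \<Psi> where "\<Psi> t = Re (deriv F (of_real t * w)) + 2*M * ln (1 + t * norm w)" for t
  have D: "(\<Psi> has_real_derivative
      Re (w * (deriv ^^ 2) F (of_real t * w)) + 2*M * (norm w / (1 + t * norm w))) (at t)"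
    if t: "t \<in> {0..1}" for t
  proof -
    have "1 + t * norm w > 0" using t by (simp add: add_pos_nonneg)
    with has_vector_derivative_along_ray[OF hol' open_ball of_real_mult_in_ball[OF w t]] show ?thesis
      unfolding \<Psi>_def by (auto intro!: derivative_eq_intros simp: numeral_2_eq_2)
  qed
  have "continuous_on {0..1} \<Psi>"
    by (intro continuous_at_imp_continuous_on ballI DERIV_isCont[OF D])
  then have "\<Psi> 0 \<le> \<Psi> 1"
  proof (rule DERIV_nonneg_imp_increasing_open[rotated 2])
    fix t :: real
    assume t: "0 < t" "t < 1"
    have tw: "norm (of_real t * w) = t * norm w" using t by (simp add: norm_mult)
    have "Re (of_real t * w * (deriv ^^ 2) F (of_real t * w))
        \<ge> - 2*M * norm (of_real t * w) / (1 + norm (of_real t * w))"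
      by (rule Schwarz_Re_lower_bound[OF hq _ re]) (use of_real_mult_in_ball[OF w, of t] t in auto)
    then have "t * Re (w * (deriv ^^ 2) F (of_real t * w)) \<ge> t * (- 2*M * norm w / (1 + t * norm w))"
      by (simp add: tw mult.assoc mult.left_commute right_diff_distrib)
    then have "Re (w * (deriv ^^ 2) F (of_real t * w)) \<ge> - 2*M * norm w / (1 + t * norm w)"
      by (rule mult_left_le_imp_le) (use t in simp)
    then have "Re (w * (deriv ^^ 2) F (of_real t * w)) + 2*M * (norm w / (1 + t * norm w)) \<ge> 0"
      by (simp add: field_simps)
    with D[of t] t show "\<exists>y. (\<Psi> has_real_derivative y) (at t) \<and> 0 \<le> y" by auto
  qed simp
  then show ?thesis using \<open>deriv F 0 = 1\<close> by (simp add: \<Psi>_def)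
qed

lemma P0_Re_cnj_mult_ge:
  assumes "P0 M F" and z: "norm z < 1"
  shows "Re (cnj z * F z) \<ge> norm z * growth_minorant M (norm z)"
proof -
  have holF: "F holomorphic_on ball 0 1" and "F 0 = 0"
    using assms(1) by (auto simp: P0_def)
  define r where "r = norm z"
  have "r \<ge> 0" by (simp add: r_def)
  have zz: "cnj z * z = of_real (r^2)"
    unfolding r_def by (metis complex_norm_square mult.commute)
  define \<Phi> where "\<Phi> t = Re (cnj z * F (of_real t * z)) - r * growth_minorant M (t * r)" for t
  have D: "(\<Phi> has_real_derivative r^2 * (Re (deriv F (of_real t * z)) - 1 + 2*M * ln (1 + t*r))) (at t)"
    if t: "t \<in> {0..1}" for t
  proof -
    have "t * r \<ge> 0" using t \<open>r \<ge> 0\<close> by simp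
    then have "t * r > -1" by linarith
    then have gm: "((\<lambda>t. growth_minorant M (t * r)) has_real_derivative
        (1 - 2*M * ln (1 + t*r)) * r) (at t)"
      by (rule DERIV_chain2[OF has_real_derivative_growth_minorant]) (auto intro!: derivative_eq_intros)
    have "Re (cnj z * (z * deriv F (of_real t * z))) = r^2 * Re (deriv F (of_real t * z))"
      by (simp only: mult.assoc[symmetric] zz) simp
    with has_vector_derivative_along_ray[OF holF open_ball of_real_mult_in_ball[OF z t]] show ?thesis
      unfolding \<Phi>_def by (auto intro!: derivative_eq_intros gm simp: algebra_simps power2_eq_square)
  qed
  have "continuous_on {0..1} \<Phi>"
    by (intro continuous_at_imp_continuous_on ballI DERIV_isCont[OF D])
  then have "\<Phi> 0 \<le> \<Phi> 1"
  proof (rule DERIV_nonneg_imp_increasing_open[rotated 2])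
    fix t :: real
    assume t: "0 < t" "t < 1"
    have "norm (of_real t * z) = t * r" using t by (simp add: norm_mult r_def)
    with P0_Re_deriv_ge[OF assms(1), of "of_real t * z"] of_real_mult_in_ball[OF z, of t] t
    have "Re (deriv F (of_real t * z)) - 1 + 2*M * ln (1 + t*r) \<ge> 0" by simp
    with D[of t] t show "\<exists>y. (\<Phi> has_real_derivative y) (at t) \<and> 0 \<le> y" by auto
  qed simp
  then show ?thesis using \<open>F 0 = 0\<close> by (simp add: \<Phi>_def r_def growth_minorant_def)
qed

lemma P0_tcoeff_bound:
  assumes "P0 M F" "n \<ge> 2"
  shows "norm (tcoeff F n) \<le> 2*M / (real n * (real n - 1))"
proof -
  have holF: "F holomorphic_on ball 0 1"
    and re: "\<And>z. z \<in> ball 0 1 \<Longrightarrow> Re (z * (deriv ^^ 2) F z) > -M"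
    using assms(1) by (auto simp: P0_def)
  define k where "k = n - 1"
  have "k \<ge> 1" "n = Suc k" using assms(2) by (auto simp: k_def)
  define G where "G = (deriv ^^ 2) F"
  have hG: "G holomorphic_on ball 0 1"
    unfolding G_def by (rule holomorphic_higher_deriv[OF holF open_ball])
  have "(deriv ^^ k) (\<lambda>z. z * G z) 0
      = (\<Sum>i = 0..k. of_nat (k choose i) * (deriv ^^ i) (\<lambda>w. w) 0 * (deriv ^^ (k - i)) G 0)"
    by (rule higher_deriv_mult[OF _ hG open_ball]) auto
  also have "\<dots> = (\<Sum>i = 0..k. if i = 1 then of_nat k * (deriv ^^ (k - 1)) G 0 else 0)"
    by (rule sum.cong) auto
  also have "(deriv ^^ (k - 1)) G = (deriv ^^ (k - 1 + 2)) F"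
    by (simp only: G_def funpow_add o_apply)
  also have "k - 1 + 2 = n" using \<open>k \<ge> 1\<close> \<open>n = Suc k\<close> by simp
  also have "(\<Sum>i = 0..k. if i = 1 then of_nat k * (deriv ^^ n) F 0 else 0) = of_nat k * (deriv ^^ n) F 0"
    using \<open>k \<ge> 1\<close> by simp
  finally have qk: "(deriv ^^ k) (\<lambda>z. z * G z) 0 = of_nat k * (deriv ^^ n) F 0" .
  have "of_nat (fact n) = (of_nat n * fact k :: complex)" using \<open>n = Suc k\<close> by (simp add: algebra_simps)
  with \<open>n \<ge> 2\<close> have "(deriv ^^ k) (\<lambda>z. z * G z) 0 / fact k = of_nat n * of_nat k * tcoeff F n"
    unfolding qk tcoeff_def by (simp add: field_simps)
  moreover have "norm ((deriv ^^ k) (\<lambda>z. z * G z) 0 / fact k) \<le> 2*M"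
    by (rule Caratheodory_coeff_bound[OF _ _ _ \<open>k \<ge> 1\<close>])
       (use hG re in \<open>auto intro: holomorphic_intros simp: G_def\<close>)
  ultimately have "norm (tcoeff F n) * (real n * real k) \<le> 2*M"
    by (simp add: norm_mult mult_ac)
  moreover have "real k = real n - 1" "real n * (real n - 1) > 0"
    using \<open>n = Suc k\<close> \<open>k \<ge> 1\<close> by auto
  ultimately show ?thesis by (simp add: field_simps)
qed

section \<open>The harmonic class PH0(M)\<close>

lemma PH0_imp_P0:
  assumes "PH0 M h g" "norm \<epsilon> \<le> 1"
  shows "P0 M (\<lambda>z. h z + \<epsilon> * g z)"
proof -
  have hh: "h holomorphic_on ball 0 1" and hg: "g holomorphic_on ball 0 1"
    and re: "\<And>z. z \<in> ball 0 1 \<Longrightarrow> Re (z * (deriv ^^ 2) h z) > - M + norm (z * (deriv ^^ 2) g z)"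
    using assms(1) by (auto simp: PH0_def)
  have hd: "(deriv ^^ n) (\<lambda>z. h z + \<epsilon> * g z) z = (deriv ^^ n) h z + \<epsilon> * (deriv ^^ n) g z"
    if "z \<in> ball 0 1" for n z
    using higher_deriv_add[OF hh _ open_ball that, of "\<lambda>z. \<epsilon> * g z" n]
      higher_deriv_cmult[OF hg that open_ball, of n \<epsilon>] hg
    by (simp add: holomorphic_intros)
  have "Re (z * (deriv ^^ 2) (\<lambda>z. h z + \<epsilon> * g z) z) > -M" if z: "z \<in> ball 0 1" for z
  proof -
    have "- Re (\<epsilon> * (z * (deriv ^^ 2) g z)) \<le> norm (\<epsilon> * (z * (deriv ^^ 2) g z))"
      using abs_Re_le_cmod[of "\<epsilon> * (z * (deriv ^^ 2) g z)"] by linarith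
    also have "\<dots> \<le> norm (z * (deriv ^^ 2) g z)"
      using assms(2) by (simp add: norm_mult mult_left_le_one_le)
    finally show ?thesis using re[OF z] hd[OF z, of 2] by (simp add: algebra_simps)
  qed
  with assms(1) hh hg hd[of 0 1] show ?thesis
    by (auto simp: P0_def PH0_def holomorphic_intros)
qed

lemma tcoeff_add_mult:
  assumes "h holomorphic_on ball 0 1" "g holomorphic_on ball 0 1"
  shows "tcoeff (\<lambda>z. h z + \<epsilon> * g z) n = tcoeff h n + \<epsilon> * tcoeff g n"
  using higher_deriv_add[OF assms(1) _ open_ball, of "\<lambda>z. \<epsilon> * g z" 0 n]
    higher_deriv_cmult[OF assms(2) _ open_ball, of 0 n \<epsilon>] assms(2)
  by (simp add: tcoeff_def holomorphic_intros add_divide_distrib)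

lemma exists_unimodular_norm_add_eq:
  fixes a b :: complex
  shows "\<exists>\<epsilon>. norm \<epsilon> = 1 \<and> norm (a + \<epsilon> * b) = norm a + norm b"
proof -
  define u where "u = (if a = 0 then 1 else sgn a)"
  define v where "v = (if b = 0 then 1 else sgn b)"
  have "norm u = 1" "norm v = 1" by (simp_all add: u_def v_def norm_sgn)
  have a: "of_real (norm a) * u = a" and b: "of_real (norm b) * v = b"
    by (auto simp: u_def v_def sgn_div_norm scaleR_conv_of_real)
  have "cnj v * v = 1"
    using \<open>norm v = 1\<close> complex_norm_square[of v] by (simp add: mult.commute)
  have "u * cnj v * b = u * cnj v * (of_real (norm b) * v)" by (simp only: b)
  also have "\<dots> = of_real (norm b) * u" using \<open>cnj v * v = 1\<close> by (simp add: mult_ac)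
  finally have "a + u * cnj v * b = of_real (norm a) * u + of_real (norm b) * u"
    by (simp only: a)
  then have "a + u * cnj v * b = of_real (norm a + norm b) * u"
    by (simp add: algebra_simps)
  then have "norm (a + u * cnj v * b) = norm a + norm b"
    using \<open>norm u = 1\<close> by (simp only: norm_mult norm_of_real mult_1_right) simp
  moreover have "norm (u * cnj v) = 1" using \<open>norm u = 1\<close> \<open>norm v = 1\<close> by (simp add: norm_mult)
  ultimately show ?thesis by blast
qed

lemma PH0_tcoeff_bound:
  assumes "PH0 M h g" "n \<ge> 2"
  shows "norm (tcoeff h n) + norm (tcoeff g n) \<le> 2*M / (real n * (real n - 1))"
proof -
  obtain \<epsilon> where "norm \<epsilon> = 1"
    and "norm (tcoeff h n + \<epsilon> * tcoeff g n) = norm (tcoeff h n) + norm (tcoeff g n)"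
    using exists_unimodular_norm_add_eq by blast
  with P0_tcoeff_bound[OF PH0_imp_P0[OF assms(1)] assms(2), of \<epsilon>] tcoeff_add_mult[of h g \<epsilon> n] assms(1)
  show ?thesis by (simp add: PH0_def)
qed

lemma PH0_norm_harm_ge:
  assumes "PH0 M h g" "norm z < 1"
  shows "norm (harm h g z) \<ge> growth_minorant M (norm z)"
proof (cases "z = 0")
  case True
  with assms(1) show ?thesis by (simp add: PH0_def harm_def growth_minorant_def)
next
  case False
  define \<epsilon> where "\<epsilon> = z / cnj z"
  have "norm \<epsilon> = 1" using False by (simp add: \<epsilon>_def norm_divide)
  have "norm z * growth_minorant M (norm z) \<le> Re (cnj z * (h z + \<epsilon> * g z))"
    using P0_Re_cnj_mult_ge[OF PH0_imp_P0[OF assms(1)] assms(2)] \<open>norm \<epsilon> = 1\<close> by simp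
  also have "cnj z * (h z + \<epsilon> * g z) = cnj z * h z + z * g z"
    using False by (simp add: \<epsilon>_def field_simps)
  also have "Re \<dots> = Re (cnj z * harm h g z)"
    by (simp add: harm_def algebra_simps)
  also have "\<dots> \<le> norm z * norm (harm h g z)"
    using complex_Re_le_cmod[of "cnj z * harm h g z"] by (simp add: norm_mult)
  finally show ?thesis using False by (simp add: mult_le_cancel_left_pos)
qed

lemma norm_harm_le_majorant:
  assumes "h holomorphic_on ball 0 1" "g holomorphic_on ball 0 1"
    and "h 0 = 0" "deriv h 0 = 1" "g 0 = 0" "deriv g 0 = 0" and "norm z < 1"
    and sm: "summable (\<lambda>n. (norm (tcoeff h (n+2)) + norm (tcoeff g (n+2))) * norm z ^ (n+2))"
  shows "norm (harm h g z) \<le> norm z + (\<Sum>n. (norm (tcoeff h (n+2)) + norm (tcoeff g (n+2))) * norm z ^ (n+2))"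
proof -
  define A where "A = (\<lambda>n. tcoeff h (n+2) * z ^ (n+2))"
  define B where "B = (\<lambda>n. tcoeff g (n+2) * z ^ (n+2))"
  have nA: "(\<lambda>n. norm (A n)) = (\<lambda>n. norm (tcoeff h (n+2)) * norm z ^ (n+2))"
    and nB: "(\<lambda>n. norm (B n)) = (\<lambda>n. norm (tcoeff g (n+2)) * norm z ^ (n+2))"
    by (simp_all add: A_def B_def norm_mult norm_power)
  have "summable (\<lambda>n. norm (A n))" "summable (\<lambda>n. norm (B n))"
    unfolding nA nB by (rule summable_comparison_test'[OF sm], simp add: mult_right_mono)+
  moreover have "h z - z = suminf A" "g z = suminf B"
    using sums_tcoeff_from_two[OF assms(1,7)] sums_tcoeff_from_two[OF assms(2,7)] assms(3-6)
    unfolding A_def B_def by (simp_all add: sums_iff)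
  ultimately have "norm (h z - z) + norm (g z) \<le> (\<Sum>n. norm (A n)) + (\<Sum>n. norm (B n))"
    by (simp add: add_mono summable_norm)
  also have "\<dots> = (\<Sum>n. norm (A n) + norm (B n))"
    by (rule suminf_add[OF \<open>summable (\<lambda>n. norm (A n))\<close> \<open>summable (\<lambda>n. norm (B n))\<close>])
  also have "\<dots> = (\<Sum>n. (norm (tcoeff h (n+2)) + norm (tcoeff g (n+2))) * norm z ^ (n+2))"
    by (simp add: A_def B_def norm_mult norm_power algebra_simps)
  finally show ?thesis
    using norm_triangle_ineq[of "h z - z" z] norm_triangle_ineq[of "h z" "cnj (g z)"]
    by (simp add: harm_def)
qed

lemma PH0_coeff_series_bound:
  assumes "PH0 M h g" "0 \<le> r" "r < 1"
  shows "summable (\<lambda>n. (norm (tcoeff h (n+2)) + norm (tcoeff g (n+2))) * r ^ (n+2))"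
    and "(\<Sum>n. (norm (tcoeff h (n+2)) + norm (tcoeff g (n+2))) * r ^ (n+2)) \<le> 2*M * (r + (1-r) * ln (1-r))"
proof -
  have S: "(\<lambda>n. 2*M * (r ^ (n+2) / of_nat ((n+2) * (n+1)))) sums (2*M * (r + (1-r) * ln (1-r)))"
    using sums_mult[OF sums_power_div_consecutive_real] assms(2,3) by simp
  have le: "(norm (tcoeff h (n+2)) + norm (tcoeff g (n+2))) * r ^ (n+2)
      \<le> 2*M * (r ^ (n+2) / of_nat ((n+2) * (n+1)))" for n
    using mult_right_mono[OF PH0_tcoeff_bound[OF assms(1), of "n+2"], of "r ^ (n+2)"] assms(2)
    by (simp add: algebra_simps)
  show sm: "summable (\<lambda>n. (norm (tcoeff h (n+2)) + norm (tcoeff g (n+2))) * r ^ (n+2))"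
    by (rule summable_comparison_test'[OF sums_summable[OF S]]) (use le assms(2) in auto)
  show "(\<Sum>n. (norm (tcoeff h (n+2)) + norm (tcoeff g (n+2))) * r ^ (n+2)) \<le> 2*M * (r + (1-r) * ln (1-r))"
    unfolding sums_unique[OF S] by (rule suminf_le[OF le sm sums_summable[OF S]])
qed

lemma PH0_bohr_lhs_le:
  assumes "PH0 M h g" "norm z < 1"
  shows "bohr_lhs h g z \<le> 2 * norm z + 4*M * (norm z + (1 - norm z) * ln (1 - norm z))"
  using norm_harm_le_majorant[OF _ _ _ _ _ _ assms(2) PH0_coeff_series_bound(1)[OF assms(1) _ assms(2)]]
    PH0_coeff_series_bound(2)[OF assms(1) _ assms(2)] assms(1)
  by (simp add: PH0_def bohr_lhs_def)

section \<open>Distance to the boundary\<close>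

lemma bdist_ge:
  fixes f :: "complex \<Rightarrow> complex" and L :: "real \<Rightarrow> real"
  assumes lim: "(L \<longlongrightarrow> c) (at_left 1)"
    and le: "\<And>z. norm z < 1 \<Longrightarrow> L (norm z) \<le> norm (f z - f 0)"
  shows "ereal c \<le> bdist f"
  unfolding bdist_def le_Liminf_iff
proof (intro allI impI)
  fix y
  assume "y < ereal c"
  moreover have "((\<lambda>r. ereal (L r)) \<longlongrightarrow> ereal c) (at_left 1)"
    using lim by (rule tendsto_ereal)
  ultimately have "eventually (\<lambda>r. y < ereal (L r) \<and> r \<in> {0<..<1}) (at_left 1)"
    by (intro eventually_conj order_tendstoD(1) eventually_at_left_real) auto
  then show "eventually (\<lambda>z. y < ereal (norm (f z - f 0))) (filtercomap norm (at_left 1))"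
    unfolding eventually_filtercomap
  proof (intro exI conjI allI impI)
    fix z :: complex
    assume "y < ereal (L (norm z)) \<and> norm z \<in> {0<..<1}"
    with le[of z] show "y < ereal (norm (f z - f 0))" by (auto intro: order_less_le_trans)
  qed
qed

lemma bdist_le:
  fixes f :: "complex \<Rightarrow> complex" and L :: "real \<Rightarrow> real"
  assumes lim: "(L \<longlongrightarrow> c) (at_left 1)"
    and le: "\<And>t. 0 < t \<Longrightarrow> t < 1 \<Longrightarrow> \<exists>z. norm z = t \<and> norm (f z - f 0) \<le> L t"
  shows "bdist f \<le> ereal c"
  unfolding bdist_def
proof (rule Liminf_least)
  fix P :: "complex \<Rightarrow> bool"
  assume "eventually P (filtercomap norm (at_left 1))"
  then obtain Q where Q: "eventually Q (at_left 1)" and QP: "\<And>z. Q (norm z) \<Longrightarrow> P z"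
    unfolding eventually_filtercomap by blast
  have "eventually (\<lambda>t::real. t \<in> {0<..<1}) (at_left 1)"
    by (rule eventually_at_left_real) simp
  with Q have "eventually (\<lambda>t. (INF z\<in>Collect P. ereal (norm (f z - f 0))) \<le> ereal (L t)) (at_left 1)"
  proof eventually_elim
    case (elim t)
    with le[of t] obtain z where "norm z = t" "norm (f z - f 0) \<le> L t" by auto
    with elim QP have "P z" by simp
    then have "(INF z\<in>Collect P. ereal (norm (f z - f 0))) \<le> ereal (norm (f z - f 0))"
      by (intro INF_lower) simp
    with \<open>norm (f z - f 0) \<le> L t\<close> show ?case by (simp add: order_trans)
  qed
  then show "(INF z\<in>Collect P. ereal (norm (f z - f 0))) \<le> ereal c"
    by (intro tendsto_lowerbound[OF tendsto_ereal[OF lim]]) auto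
qed

lemma tendsto_growth_minorant_at_left_one: "((\<lambda>r. growth_minorant M r) \<longlongrightarrow> growth_minorant M 1) (at_left 1)"
  unfolding growth_minorant_def by (intro tendsto_intros) auto

lemma PH0_bdist_ge:
  assumes "PH0 M h g"
  shows "ereal (growth_minorant M 1) \<le> bdist (harm h g)"
proof (rule bdist_ge[OF tendsto_growth_minorant_at_left_one])
  have "harm h g 0 = 0" using assms by (simp add: PH0_def harm_def)
  then show "growth_minorant M (norm z) \<le> norm (harm h g z - harm h g 0)" if "norm z < 1" for z
    using PH0_norm_harm_ge[OF assms that] by simp
qed

section \<open>The radius r_M\<close>

lemma growth_minorant_one_pos:
  assumes "0 < M" "M < 1 / (2 * (ln 4 - 1))"
  shows "growth_minorant M 1 > 0"
proof -
  have "ln (4::real) = 2 * ln 2"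
    using ln_realpow[of 2 2] by simp
  moreover have "ln (4::real) > 1"
    using exp_le ln_less_cancel_iff[of "exp 1" 4] by simp
  ultimately show ?thesis
    using assms by (simp add: growth_minorant_def field_simps)
qed

lemma rM_eq_eq: "rM_eq M r = 2*r + 4*M*(r + (1-r) * ln (1-r)) - growth_minorant M 1"
  by (simp add: rM_eq_def growth_minorant_def algebra_simps)

lemma has_real_derivative_rM_eq:
  assumes "r < 1"
  shows "(rM_eq M has_real_derivative (2 - 4*M*ln(1-r))) (at r)"
  unfolding rM_eq_def[abs_def] using assms
  by (auto intro!: derivative_eq_intros)

lemma rM_eq_strict_mono:
  assumes "M > 0" "0 \<le> x" "x < y" "y < 1"
  shows "rM_eq M x < rM_eq M y"
proof (rule DERIV_pos_imp_increasing[OF \<open>x < y\<close>])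
  fix t assume "x \<le> t" "t \<le> y"
  with assms have "M * ln (1-t) \<le> 0"
    by (intro mult_nonneg_nonpos) auto
  with \<open>t \<le> y\<close> \<open>y < 1\<close> show "\<exists>d. (rM_eq M has_real_derivative d) (at t) \<and> 0 < d"
    using has_real_derivative_rM_eq[of t M] by force
qed

lemma rM_eq_unique_root:
  assumes "0 < M" "M < 1 / (2 * (ln 4 - 1))"
  shows "\<exists>!r. 0 < r \<and> r < 1 \<and> rM_eq M r = 0"
proof -
  have neg: "rM_eq M 0 < 0"
    using growth_minorant_one_pos[OF assms] by (simp add: rM_eq_eq)
  have "rM_eq M (1/2) = 2*M*ln 2"
    by (simp add: rM_eq_def ln_div algebra_simps)
  with assms have pos: "rM_eq M (1/2) > 0" by simp
  have "\<forall>x. 0 \<le> x \<and> x \<le> 1/2 \<longrightarrow> isCont (rM_eq M) x"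
    using has_real_derivative_rM_eq DERIV_isCont by force
  with IVT[of "rM_eq M" 0 0 "1/2"] neg pos obtain r where r: "0 \<le> r" "r \<le> 1/2" "rM_eq M r = 0"
    by force
  with neg have "0 < r" by (cases "r = 0") auto
  show ?thesis
  proof (rule ex1I[of _ r])
    show "0 < r \<and> r < 1 \<and> rM_eq M r = 0" using r \<open>0 < r\<close> by simp
    fix s assume "0 < s \<and> s < 1 \<and> rM_eq M s = 0"
    with r \<open>0 < r\<close> rM_eq_strict_mono[OF \<open>0 < M\<close>, of s r] rM_eq_strict_mono[OF \<open>0 < M\<close>, of r s]
    show "s = r" by (cases s r rule: linorder_cases) auto
  qed
qed

lemma rM_root:
  assumes "0 < M" "M < 1 / (2 * (ln 4 - 1))"
  shows "0 < rM M" "rM M < 1" "rM_eq M (rM M) = 0"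
  using theI'[OF rM_eq_unique_root[OF assms]] by (auto simp: rM_def)

lemma rM_eq_nonpos:
  assumes "0 < M" "M < 1 / (2 * (ln 4 - 1))" "0 \<le> r" "r \<le> rM M"
  shows "rM_eq M r \<le> 0"
  using rM_eq_strict_mono[OF \<open>0 < M\<close> \<open>0 \<le> r\<close>, of "rM M"] rM_root[OF assms(1,2)] assms(4)
  by (cases "r = rM M") auto

lemma rM_eq_pos:
  assumes "0 < M" "M < 1 / (2 * (ln 4 - 1))" "rM M < r" "r < 1"
  shows "rM_eq M r > 0"
  using rM_eq_strict_mono[OF \<open>0 < M\<close> _ assms(3,4)] rM_root[OF assms(1,2)] by simp

lemma PH0_bohr_inequality:
  assumes "0 < M" "M < 1 / (2 * (ln 4 - 1))" "PH0 M h g" "norm z \<le> rM M"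
  shows "ereal (bohr_lhs h g z) \<le> bdist (harm h g)"
proof -
  have "bohr_lhs h g z \<le> rM_eq M (norm z) + growth_minorant M 1"
    using PH0_bohr_lhs_le[OF assms(3)] rM_root(2)[OF assms(1,2)] assms(4) by (simp add: rM_eq_eq)
  also have "\<dots> \<le> growth_minorant M 1"
    using rM_eq_nonpos[OF assms(1,2) _ assms(4)] by simp
  finally have "ereal (bohr_lhs h g z) \<le> ereal (growth_minorant M 1)" by simp
  then show ?thesis using PH0_bdist_ge[OF assms(3)] by (rule order_trans)
qed

section \<open>The extremal function\<close>

lemma fM_h_eq:
  assumes "norm z < 1"
  shows "fM_h M z = z + 2 * of_real M * (z + (1-z) * ln (1-z))"
  using sums_power_div_consecutive[OF assms] by (simp add: fM_h_def sums_iff)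

lemma fM_h_of_real:
  fixes x :: real
  assumes "\<bar>x\<bar> < 1"
  shows "fM_h M (of_real x) = of_real (x + 2*M*(x + (1-x) * ln (1-x)))"
  using assms by (simp add: fM_h_eq Ln_one_minus_of_real)

lemma one_minus_notin_nonpos_Reals:
  fixes z :: complex
  assumes "norm z < 1"
  shows "1 - z \<notin> \<real>\<^sub>\<le>\<^sub>0"
  using complex_Re_le_cmod[of z] assms by (auto simp: complex_nonpos_Reals_iff)

lemma has_field_derivative_antiderivative_ln:
  fixes z :: complex
  assumes "norm z < 1"
  shows "((\<lambda>z. z + (1-z) * ln (1-z)) has_field_derivative - ln (1-z)) (at z)"
proof -
  have "1 - z \<noteq> 0" using assms by auto
  with one_minus_notin_nonpos_Reals[OF assms] show ?thesis
    by (auto intro!: derivative_eq_intros)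
qed

lemma has_field_derivative_fM_h:
  fixes z :: complex
  assumes "norm z < 1"
  shows "(fM_h M has_field_derivative (1 - 2 * of_real M * ln (1-z))) (at z)"
proof -
  have "((\<lambda>z. z + 2 * of_real M * (z + (1-z) * ln (1-z))) has_field_derivative
      (1 - 2 * of_real M * ln (1-z))) (at z)"
    using DERIV_add[OF DERIV_ident DERIV_cmult[OF has_field_derivative_antiderivative_ln[OF assms]]]
    by simp
  then show ?thesis
    by (rule has_field_derivative_transform_within_open[of _ _ _ "ball 0 1"])
       (use assms in \<open>auto simp: fM_h_eq\<close>)
qed

lemma deriv_fM_h: "norm z < 1 \<Longrightarrow> deriv (fM_h M) z = 1 - 2 * of_real M * ln (1-z)"
  by (rule DERIV_imp_deriv[OF has_field_derivative_fM_h])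

lemma holomorphic_fM_h: "fM_h M holomorphic_on ball 0 1"
  by (auto simp: holomorphic_on_open intro!: exI has_field_derivative_fM_h)

lemma deriv2_fM_h:
  fixes z :: complex
  assumes "norm z < 1"
  shows "(deriv ^^ 2) (fM_h M) z = 2 * of_real M / (1 - z)"
proof -
  have "((\<lambda>z. 1 - 2 * of_real M * ln (1-z)) has_field_derivative 2 * of_real M / (1 - z)) (at z)"
    using one_minus_notin_nonpos_Reals[OF assms]
    by (auto intro!: derivative_eq_intros simp: divide_inverse mult_ac)
  then have "(deriv (fM_h M) has_field_derivative 2 * of_real M / (1 - z)) (at z)"
    by (rule has_field_derivative_transform_within_open[of _ _ _ "ball 0 1"])
       (use assms in \<open>auto simp: deriv_fM_h\<close>)
  then show ?thesis by (simp add: numeral_2_eq_2 DERIV_imp_deriv)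
qed

lemma PH0_fM_h:
  assumes "M > 0"
  shows "PH0 M (fM_h M) (\<lambda>_. 0)"
  unfolding PH0_def
proof (intro conjI ballI)
  show "fM_h M holomorphic_on ball 0 1" by (rule holomorphic_fM_h)
  show "fM_h M 0 = 0" "deriv (fM_h M) 0 = 1"
    by (simp_all add: fM_h_eq deriv_fM_h)
  fix z :: complex
  assume "z \<in> ball 0 1"
  then have z: "norm z < 1" by simp
  have "0 < 1 + norm z" by (simp add: add_pos_nonneg)
  with z have "norm z / (1 + norm z) < 1/2" by (simp add: field_simps)
  with Re_div_one_minus_ge[OF z] have "Re (z / (1 - z)) > -1/2" by linarith
  with \<open>M > 0\<close> have "- M < 2*M * Re (z / (1 - z))"
    using mult_strict_left_mono[of "-1/2" "Re (z / (1 - z))" "2*M"] by simp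
  moreover have "z * (deriv ^^ 2) (fM_h M) z = (2*M) *\<^sub>R (z / (1 - z))"
    using deriv2_fM_h[OF z] by (simp add: scaleR_conv_of_real)
  ultimately show "Re (z * (deriv ^^ 2) (fM_h M) z) > - M + cmod (z * (deriv ^^ 2) (\<lambda>_. 0) z)"
    by simp
qed simp_all

definition fM_coeff :: "real \<Rightarrow> nat \<Rightarrow> complex" where
  "fM_coeff M n = (if n = 0 then 0 else if n = 1 then 1 else 2 * of_real M / of_nat (n * (n - 1)))"

lemma sums_fM_coeff:
  assumes "norm z < 1"
  shows "(\<lambda>n. fM_coeff M n * z ^ n) sums fM_h M z"
proof -
  have "(\<lambda>n. fM_coeff M (Suc (Suc n)) * z ^ Suc (Suc n)) sums (2 * of_real M * (z + (1-z) * ln (1-z)))"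
    using sums_mult[OF sums_power_div_consecutive[OF assms], of "2 * of_real M"]
    by (simp add: fM_coeff_def mult_ac)
  then have "(\<lambda>n. fM_coeff M (Suc n) * z ^ Suc n) sums (2 * of_real M * (z + (1-z) * ln (1-z)) + z)"
    by (subst (asm) sums_Suc_iff[where f = "\<lambda>n. fM_coeff M (Suc n) * z ^ Suc n"])
       (simp add: fM_coeff_def)
  then have "(\<lambda>n. fM_coeff M n * z ^ n) sums (2 * of_real M * (z + (1-z) * ln (1-z)) + z)"
    by (subst (asm) sums_Suc_iff) (simp add: fM_coeff_def)
  then show ?thesis using fM_h_eq[OF assms, of M] by (simp add: add_ac)
qed

lemma fM_h_has_fps_expansion: "fM_h M has_fps_expansion Abs_fps (fM_coeff M)"
  unfolding has_fps_expansion_def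
proof
  have "summable (\<lambda>n. fM_coeff M n * (1/2) ^ n)"
    using sums_fM_coeff[of "1/2" M] by (simp add: sums_iff)
  then have "conv_radius (fM_coeff M) \<ge> norm (1/2 :: complex)"
    by (rule conv_radius_geI)
  then show "0 < fps_conv_radius (Abs_fps (fM_coeff M))"
    by (auto simp: fps_conv_radius_def intro: less_le_trans[of _ "ereal (1/2)"])
  have "eventually (\<lambda>z. z \<in> ball (0::complex) 1) (nhds 0)"
    by (intro eventually_nhds_in_open) auto
  then show "eventually (\<lambda>z. eval_fps (Abs_fps (fM_coeff M)) z = fM_h M z) (nhds 0)"
    by eventually_elim (simp add: eval_fps_def sums_unique[OF sums_fM_coeff])
qed

lemma tcoeff_fM_h:
  assumes "n \<ge> 2"
  shows "tcoeff (fM_h M) n = 2 * of_real M / of_nat (n * (n - 1))"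
  using fps_nth_fps_expansion[OF fM_h_has_fps_expansion, of M n] assms
  by (simp add: tcoeff_def fM_coeff_def)

lemma bohr_lhs_fM_h:
  assumes "0 < M" "0 < r" "r < 1"
  shows "bohr_lhs (fM_h M) (\<lambda>_. 0) (of_real r) = 2*r + 4*M * (r + (1-r) * ln (1-r))"
proof -
  define S where "S = r + (1-r) * ln (1-r)"
  have sums: "(\<lambda>n. r ^ (n+2) / of_nat ((n+2) * (n+1))) sums S"
    unfolding S_def by (rule sums_power_div_consecutive_real) (use assms in simp)
  have "S \<ge> 0"
    by (rule sums_le[OF _ sums_zero sums]) (use assms(2) in simp)
  have "(norm (tcoeff (fM_h M) (n+2)) + norm (tcoeff (\<lambda>_. 0) (n+2))) * norm (of_real r :: complex) ^ (n+2)
      = 2*M * (r ^ (n+2) / of_nat ((n+2) * (n+1)))" for n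
  proof -
    have "tcoeff (\<lambda>_. 0) (n+2) = 0" by (simp add: tcoeff_def)
    moreover have "tcoeff (fM_h M) (n+2) = of_real (2*M / of_nat ((n+2) * (n+1)))"
      using tcoeff_fM_h[of "n+2" M] by simp
    then have "norm (tcoeff (fM_h M) (n+2)) = 2*M / of_nat ((n+2) * (n+1))"
      using assms(1) by (simp only: norm_of_real) simp
    ultimately show ?thesis using assms(2) by simp
  qed
  with sums_mult[OF sums, of "2*M"]
  have "(\<Sum>n. (norm (tcoeff (fM_h M) (n+2)) + norm (tcoeff (\<lambda>_. 0) (n+2))) * norm (of_real r :: complex) ^ (n+2))
      = 2*M * S"
    by (simp add: sums_iff)
  moreover have "harm (fM_h M) (\<lambda>_. 0) (of_real r) = of_real (r + 2*M * S)"
    using fM_h_of_real[of r M] assms(2,3) by (simp add: harm_def S_def)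
  ultimately have "bohr_lhs (fM_h M) (\<lambda>_. 0) (of_real r) = norm (of_real r :: complex) + \<bar>r + 2*M * S\<bar> + 2*M * S"
    by (simp only: bohr_lhs_def norm_of_real)
  with assms \<open>S \<ge> 0\<close> show ?thesis by (simp add: S_def)
qed

lemma bdist_fM_h_le:
  assumes "0 < M" "M < 1 / (2 * (ln 4 - 1))"
  shows "bdist (harm (fM_h M) (\<lambda>_. 0)) \<le> ereal (growth_minorant M 1)"
proof (rule bdist_le)
  have "((\<lambda>t. \<bar>growth_minorant M t\<bar>) \<longlongrightarrow> \<bar>growth_minorant M 1\<bar>) (at_left 1)"
    by (intro tendsto_intros tendsto_growth_minorant_at_left_one)
  then show "((\<lambda>t. \<bar>growth_minorant M t\<bar>) \<longlongrightarrow> growth_minorant M 1) (at_left 1)"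
    using growth_minorant_one_pos[OF assms] by simp
  fix t :: real
  assume "0 < t" "t < 1"
  \<comment> \<open>along the negative radius the extremal function attains the growth bound\<close>
  then have "harm (fM_h M) (\<lambda>_. 0) (of_real (-t)) = - of_real (growth_minorant M t)"
    using fM_h_of_real[of "-t" M] by (simp add: harm_def growth_minorant_def algebra_simps)
  with \<open>0 < t\<close> show "\<exists>z. norm z = t \<and>
      norm (harm (fM_h M) (\<lambda>_. 0) z - harm (fM_h M) (\<lambda>_. 0) 0) \<le> \<bar>growth_minorant M t\<bar>"
    by (intro exI[of _ "of_real (-t)"]) (simp add: harm_def fM_h_eq)
qed

lemma fM_h_violates_bohr_inequality:
  assumes "0 < M" "M < 1 / (2 * (ln 4 - 1))" "rM M < r" "r < 1"
  shows "ereal (bohr_lhs (fM_h M) (\<lambda>_. 0) (of_real r)) > bdist (harm (fM_h M) (\<lambda>_. 0))"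
proof -
  have "bohr_lhs (fM_h M) (\<lambda>_. 0) (of_real r) = rM_eq M r + growth_minorant M 1"
    using bohr_lhs_fM_h[OF assms(1)] rM_root(1)[OF assms(1,2)] assms(3,4) by (simp add: rM_eq_eq)
  then have "ereal (growth_minorant M 1) < ereal (bohr_lhs (fM_h M) (\<lambda>_. 0) (of_real r))"
    using rM_eq_pos[OF assms] by simp
  with bdist_fM_h_le[OF assms(1,2)] show ?thesis by (rule order_le_less_trans)
qed

theorem theorem2p1:
  fixes M :: real and h g :: "complex \<Rightarrow> complex"
  assumes "0 < M" and "M < 1 / (2 * (ln 4 - 1))" and "PH0 M h g"
  shows "(\<exists>!r. 0 < r \<and> r < 1 \<and> rM_eq M r = 0)
    \<and> (\<forall>z. cmod z \<le> rM M \<longrightarrow> ereal (bohr_lhs h g z) \<le> bdist (harm h g))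
    \<and> PH0 M (fM_h M) (\<lambda>_. 0)
    \<and> (\<forall>\<rho>. rM M < \<rho> \<and> \<rho> < 1 \<longrightarrow>
         (\<exists>z. cmod z = \<rho> \<and> ereal (bohr_lhs (fM_h M) (\<lambda>_. 0) z) > bdist (harm (fM_h M) (\<lambda>_. 0))))"
proof (intro conjI allI impI)
  show "\<exists>!r. 0 < r \<and> r < 1 \<and> rM_eq M r = 0" by (rule rM_eq_unique_root[OF assms(1,2)])
  show "PH0 M (fM_h M) (\<lambda>_. 0)" by (rule PH0_fM_h[OF assms(1)])
  show "ereal (bohr_lhs h g z) \<le> bdist (harm h g)" if "cmod z \<le> rM M" for z
    using PH0_bohr_inequality[OF assms that] .
next
  fix \<rho> :: real
  assume "rM M < \<rho> \<and> \<rho> < 1"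
  moreover from this have "cmod (complex_of_real \<rho>) = \<rho>" using rM_root(1)[OF assms(1,2)] by simp
  ultimately show "\<exists>z. cmod z = \<rho> \<and> ereal (bohr_lhs (fM_h M) (\<lambda>_. 0) z) > bdist (harm (fM_h M) (\<lambda>_. 0))"
    using fM_h_violates_bohr_inequality[OF assms(1,2)] by metis
qed

end
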